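(* Let $(G;+)$ be a finite abelian group, $n\ge3$, and $\rho=\{(a_1,\dots,a_n)\in G^n:\ a_1+\dots+a_n=0\}$. Suppose $\rho$ is preserved by a WNU vector-function $(f_1,\dots,f_n)$ of arity $m$. Then for every $j\in\{1,\dots,n\}$ there is a positive integer $t$ with $f_j(x_1,\dots,x_m)=t\cdot x_1+\dots+t\cdot x_m$ for all $x_1,\dots,x_m\in G$.
   Context: A WNU is an $m$-ary ($m\ge2$) operation $f$ with $f(x,\dots,x)=x$ and $f(y,x,\dots,x)=f(x,y,x,\dots,x)=\dots=f(x,\dots,x,y)$. A WNU vector-function of arity $m$ is a tuple $(f_1,\dots,f_n)$ of $m$-ary WNUs on $G$; it preserves $\rho\subseteq G^n$ if for all $\alpha^1,\dots,\alpha^m\in\rho$ the tuple $(f_1(\alpha^1(1),\dots,\alpha^m(1)),\dots,f_n(\alpha^1(n),\dots,\alpha^m(n)))\in\rho$. $t\cdot x$ denotes $x+\dots+x$ ($t$ times). *)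

theory Defs
  imports Main
begin

definition tmul :: "nat \<Rightarrow> 'a::comm_monoid_add \<Rightarrow> 'a" where
  "tmul t x = (\<Sum>_<t. x)"

(* an m-ary operation on 'a is represented as a function on lists of length m *)
definition is_WNU :: "nat \<Rightarrow> ('a list \<Rightarrow> 'a) \<Rightarrow> bool" where
  "is_WNU m f \<longleftrightarrow> m \<ge> 2 \<and>
     (\<forall>x. f (replicate m x) = x) \<and>
     (\<forall>x y. \<forall>i<m. f ((replicate m x)[i := y]) = f ((replicate m x)[0 := y]))"

(* rho as a relation on n-tuples indexed by 1..n (components outside 1..n irrelevant) *)
definition zero_sum_rel :: "nat \<Rightarrow> (nat \<Rightarrow> 'a::comm_monoid_add) set" where
  "zero_sum_rel n = {a. (\<Sum>i=1..n. a i) = 0}"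

definition preserves :: "nat \<Rightarrow> nat \<Rightarrow> (nat \<Rightarrow> 'a list \<Rightarrow> 'a) \<Rightarrow> (nat \<Rightarrow> 'a) set \<Rightarrow> bool" where
  "preserves n m f rho \<longleftrightarrow>
     (\<forall>\<alpha> :: nat \<Rightarrow> nat \<Rightarrow> 'a. (\<forall>k<m. \<alpha> k \<in> rho) \<longrightarrow>
        (\<lambda>i. f i (map (\<lambda>k. \<alpha> k i) [0..<m])) \<in> rho)"

end

theory Submission
  imports Defs
begin

text \<open>Applying the vector function to tuples of the relation that vanish outside three distinct
  coordinates \<open>j, l, p\<close> gives \<open>f\<^sub>j(x) + f\<^sub>l(y) + f\<^sub>p(z) = 0\<close> whenever \<open>x + y + z = 0\<close> coordinatewise.
  As \<open>n \<ge> 3\<close>, this forces all \<open>f\<^sub>j\<close> to be one additive function \<open>\<phi>\<close>. Being additive and a WNU,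
  \<open>\<phi>(x\<^sub>1,\<dots>,x\<^sub>m) = h(x\<^sub>1) + \<dots> + h(x\<^sub>m)\<close> with \<open>h(a) = \<phi>(a,0,\<dots>,0)\<close>, and idempotence gives \<open>m\<cdot>h(x) = x\<close>.
  So multiplication by \<open>m\<close> is onto, hence a permutation of the finite group; some power \<open>m\<^sup>d\<close> with
  \<open>d > 0\<close> is the identity, and \<open>h(x) = m\<^sup>d\<^sup>-\<^sup>1\<cdot>(m\<cdot>h(x)) = m\<^sup>d\<^sup>-\<^sup>1\<cdot>x\<close>.\<close>

lemma tmul_0 [simp]: "tmul 0 x = 0"
  by (simp add: tmul_def)

lemma tmul_Suc_0 [simp]: "tmul (Suc 0) x = x"
  by (simp add: tmul_def)

lemma tmul_Suc: "tmul (Suc t) x = tmul t x + x"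
  by (simp add: tmul_def)

lemma tmul_add: "tmul (a + b) (x::'a::comm_monoid_add) = tmul a x + tmul b x"
  by (induct b) (simp_all add: tmul_Suc add.assoc)

lemma tmul_mult: "tmul (a * b) (x::'a::comm_monoid_add) = tmul a (tmul b x)"
  by (induct a) (simp_all add: tmul_Suc tmul_add add.commute)

lemma funpow_tmul: "tmul m ^^ k = tmul (m ^ k)"
  by (induct k) (simp_all add: fun_eq_iff tmul_mult)

lemma inj_funpow_eq_id:
  fixes g :: "'a::finite \<Rightarrow> 'a"
  assumes "inj g"
  obtains d where "d > 0" "g ^^ d = id"
proof -
  have "\<not> inj (\<lambda>k::nat. g ^^ k)"
  proof
    assume "inj (\<lambda>k::nat. g ^^ k)"
    then have "finite (UNIV :: nat set)"
      using finite_imageD[of "\<lambda>k. g ^^ k" UNIV] by simp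
    then show False by simp
  qed
  then obtain i j where "i < j" "g ^^ i = g ^^ j"
    unfolding inj_def by (metis linorder_neqE_nat)
  then have "g ^^ i \<circ> g ^^ (j - i) = g ^^ i \<circ> id"
    by (metis funpow_add le_add_diff_inverse less_imp_le comp_id)
  then have "g ^^ (j - i) = id"
    using inj_fn[OF assms, of i] by (simp add: fun_eq_iff inj_eq)
  with \<open>i < j\<close> show thesis by (intro that) simp_all
qed

lemma right_inverse_of_tmul_eq_tmul:
  fixes h :: "'a::{comm_monoid_add, finite} \<Rightarrow> 'a"
  assumes "m > 0"
    and inverse: "\<And>x. tmul m (h x) = x"
  obtains t where "t > 0" "\<And>x. h x = tmul t x"
proof -
  have "surj (tmul m :: 'a \<Rightarrow> 'a)"
    using inverse by (metis surjI)
  then have "inj (tmul m :: 'a \<Rightarrow> 'a)"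
    by (rule finite_UNIV_surj_inj[OF finite_UNIV])
  then obtain d where "d > 0" and period: "tmul m ^^ d = (id :: 'a \<Rightarrow> 'a)"
    by (rule inj_funpow_eq_id)
  obtain e where "d = Suc e"
    using \<open>d > 0\<close> by (cases d) auto
  have "h x = tmul (m ^ e) x" for x
  proof -
    have "h x = (tmul m ^^ Suc e) (h x)"
      using period \<open>d = Suc e\<close> by simp
    also have "\<dots> = tmul (m ^ e * m) (h x)"
      by (simp only: funpow_tmul power_Suc2)
    also have "\<dots> = tmul (m ^ e) x"
      by (simp only: tmul_mult inverse)
    finally show ?thesis .
  qed
  then show thesis using \<open>m > 0\<close> by (intro that) simp_all
qed

lemma additive_eq_sum_unit_vectors:
  fixes \<phi> :: "'a::ab_group_add list \<Rightarrow> 'a"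
  assumes additive: "\<And>v w. \<phi> (map (\<lambda>k. v k + w k) [0..<m]) = \<phi> (map v [0..<m]) + \<phi> (map w [0..<m])"
    and symmetric: "\<And>k a. k < m \<Longrightarrow> \<phi> ((replicate m 0)[k := a]) = \<phi> ((replicate m 0)[0 := a])"
  shows "\<phi> (map v [0..<m]) = (\<Sum>k<m. \<phi> ((replicate m 0)[0 := v k]))"
proof -
  have zero: "\<phi> (map (\<lambda>_. 0) [0..<m]) = 0"
    using additive[of "\<lambda>_. 0" "\<lambda>_. 0"] by simp
  have unit: "\<phi> (map (\<lambda>i. if i = k then a else 0) [0..<m]) = \<phi> ((replicate m 0)[0 := a])"
    if "k < m" for k a
  proof -
    have "map (\<lambda>i. if i = k then a else 0) [0..<m] = (replicate m 0)[k := a]"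
      by (rule nth_equalityI) auto
    then show ?thesis using symmetric[OF that] by simp
  qed
  have "\<phi> (map (\<lambda>i. if i < K then v i else 0) [0..<m]) = (\<Sum>k<K. \<phi> ((replicate m 0)[0 := v k]))"
    if "K \<le> m" for K
    using that
  proof (induct K)
    case 0
    then show ?case using zero by simp
  next
    case (Suc K)
    have "(\<lambda>i. if i < Suc K then v i else 0)
        = (\<lambda>i. (if i < K then v i else 0) + (if i = K then v K else 0))"
      by auto
    then show ?case
      using Suc additive unit[of K "v K"] by simp
  qed
  moreover have "map (\<lambda>i. if i < m then v i else 0) [0..<m] = map v [0..<m]"
    by simp
  ultimately show ?thesis by (metis order_refl)
qed

lemma additive_WNU_eq_sum_tmul:
  fixes \<phi> :: "'a::{ab_group_add, finite} list \<Rightarrow> 'a"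
  assumes WNU: "is_WNU m \<phi>"
    and additive: "\<And>v w. \<phi> (map (\<lambda>k. v k + w k) [0..<m]) = \<phi> (map v [0..<m]) + \<phi> (map w [0..<m])"
  obtains t where "t > 0" "\<And>xs. length xs = m \<Longrightarrow> \<phi> xs = (\<Sum>x\<leftarrow>xs. tmul t x)"
proof -
  have "m \<ge> 2" and idempotent: "\<And>x. \<phi> (replicate m x) = x"
    and symmetric: "\<And>k a. k < m \<Longrightarrow> \<phi> ((replicate m 0)[k := a]) = \<phi> ((replicate m 0)[0 := a])"
    using WNU unfolding is_WNU_def by blast+
  define h where "h a = \<phi> ((replicate m 0)[0 := a])" for a
  have sum: "\<phi> (map v [0..<m]) = (\<Sum>k<m. h (v k))" for v
    unfolding h_def by (rule additive_eq_sum_unit_vectors[OF additive symmetric])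
  have "m > 0"
    using \<open>m \<ge> 2\<close> by simp
  have "tmul m (h x) = x" for x
  proof -
    have "x = \<phi> (map (\<lambda>_. x) [0..<m])"
      using idempotent[of x] by (simp add: map_replicate_const)
    also have "\<dots> = tmul m (h x)"
      by (simp add: sum tmul_def)
    finally show ?thesis by simp
  qed
  then obtain t where "t > 0" and h: "\<And>x. h x = tmul t x"
    using right_inverse_of_tmul_eq_tmul[OF \<open>m > 0\<close>] by blast
  have "\<phi> xs = (\<Sum>x\<leftarrow>xs. tmul t x)" if "length xs = m" for xs
  proof -
    have "\<phi> xs = \<phi> (map ((!) xs) [0..<m])"
      using that map_nth[of xs] by simp
    also have "\<dots> = (\<Sum>x\<leftarrow>xs. tmul t x)"
      using that by (simp add: sum h sum_list_sum_nth atLeast0LessThan)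
    finally show ?thesis .
  qed
  with \<open>t > 0\<close> show thesis by (rule that)
qed

lemma preserves_zero_sum_rel_triple:
  fixes f :: "nat \<Rightarrow> 'a::comm_monoid_add list \<Rightarrow> 'a"
  assumes preserves: "preserves n m f (zero_sum_rel n)"
    and zero: "\<And>i. i \<in> {1..n} \<Longrightarrow> f i (replicate m 0) = 0"
    and indices: "j \<in> {1..n}" "l \<in> {1..n}" "p \<in> {1..n}" "distinct [j, l, p]"
    and lengths: "length xs = m" "length ys = m" "length zs = m"
    and sum_zero: "\<And>k. k < m \<Longrightarrow> xs ! k + ys ! k + zs ! k = 0"
  shows "f j xs + f l ys + f p zs = 0"
proof -
  define \<alpha> where "\<alpha> k i = (if i = j then xs ! k else 0) + (if i = l then ys ! k else 0)
      + (if i = p then zs ! k else 0)" for k i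
  define arg where "arg i = (if i = j then xs else if i = l then ys else if i = p then zs
      else replicate m 0)" for i
  have "\<forall>k<m. \<alpha> k \<in> zero_sum_rel n"
    using indices sum_zero by (simp add: zero_sum_rel_def \<alpha>_def sum.distrib)
  then have "(\<lambda>i. f i (map (\<lambda>k. \<alpha> k i) [0..<m])) \<in> zero_sum_rel n"
    using preserves unfolding preserves_def by blast
  moreover have "map (\<lambda>k. \<alpha> k i) [0..<m] = arg i" for i
    using indices lengths by (intro nth_equalityI) (auto simp: \<alpha>_def arg_def)
  ultimately have "(\<Sum>i=1..n. f i (arg i)) = 0"
    by (simp add: zero_sum_rel_def)
  also have "(\<Sum>i=1..n. f i (arg i))
      = (\<Sum>i=1..n. (if i = j then f j xs else 0) + (if i = l then f l ys else 0)
          + (if i = p then f p zs else 0))"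
    using indices zero by (intro sum.cong) (auto simp: arg_def)
  also have "\<dots> = f j xs + f l ys + f p zs"
    using indices by (simp add: sum.distrib)
  finally show ?thesis .
qed

context
  fixes f :: "nat \<Rightarrow> 'a::ab_group_add list \<Rightarrow> 'a" and n m :: nat
  assumes three: "3 \<le> n"
    and zero: "\<And>i. i \<in> {1..n} \<Longrightarrow> f i (replicate m 0) = 0"
    and preserves: "preserves n m f (zero_sum_rel n)"
begin

lemma third_index:
  obtains p where "p \<in> {1..n}" "p \<noteq> j" "p \<noteq> l"
proof -
  have "\<exists>p\<in>{1, 2, 3::nat}. p \<noteq> j \<and> p \<noteq> l"
    by auto
  then obtain p where "p \<in> {1, 2, 3}" "p \<noteq> j" "p \<noteq> l"
    by blast
  with three show thesis by (intro that) auto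
qed

lemma preserves_zero_sum_rel_uminus:
  assumes "j \<in> {1..n}" "l \<in> {1..n}" "j \<noteq> l" "length xs = m"
  shows "f j xs + f l (map uminus xs) = 0"
proof -
  obtain p where p: "p \<in> {1..n}" "p \<noteq> j" "p \<noteq> l"
    using third_index .
  have "f j xs + f l (map uminus xs) + f p (replicate m 0) = 0"
    using assms p by (intro preserves_zero_sum_rel_triple[OF preserves zero]) auto
  then show ?thesis using zero[OF p(1)] by simp
qed

lemma preserves_zero_sum_rel_eq:
  assumes "j \<in> {1..n}" "length xs = m"
  shows "f j xs = f 1 xs"
proof (cases "j = 1")
  case False
  obtain p where p: "p \<in> {1..n}" "p \<noteq> j" "p \<noteq> 1"
    using third_index .
  have "f j xs + f p (map uminus xs) = 0" "f 1 xs + f p (map uminus xs) = 0"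
    using assms p three False by (auto intro!: preserves_zero_sum_rel_uminus)
  then show ?thesis by (metis add_right_cancel)
qed simp

lemma preserves_zero_sum_rel_additive:
  "f 1 (map (\<lambda>k. v k + w k) [0..<m]) = f 1 (map v [0..<m]) + f 1 (map w [0..<m])"
proof -
  have indices: "1 \<in> {1..n}" "2 \<in> {1..n}" "3 \<in> {1..n}"
    using three by auto
  let ?v = "map v [0..<m]" and ?w = "map w [0..<m]"
  let ?sum = "map (\<lambda>k. v k + w k) [0..<m]" and ?neg = "map (\<lambda>k. - (v k + w k)) [0..<m]"
  have "f 1 ?v + f 2 ?w + f 3 ?neg = 0"
    using indices by (intro preserves_zero_sum_rel_triple[OF preserves zero]) auto
  moreover have "f 1 ?sum + f 2 ?neg = 0"
    using preserves_zero_sum_rel_uminus[of 1 2 ?sum] indices by (simp add: comp_def)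
  moreover have "f 2 ?w = f 1 ?w" "f 2 ?neg = f 1 ?neg" "f 3 ?neg = f 1 ?neg"
    by (rule preserves_zero_sum_rel_eq; use indices in simp)+
  ultimately have "f 1 ?sum + f 1 ?neg = f 1 ?v + f 1 ?w + f 1 ?neg"
    by simp
  then show ?thesis by simp
qed

end

theorem mainTheorem15:
  fixes f :: "nat \<Rightarrow> 'a::{ab_group_add, finite} list \<Rightarrow> 'a"
    and n m :: nat
  assumes "n \<ge> 3"
    and "\<forall>j\<in>{1..n}. is_WNU m (f j)"
    and "preserves n m f (zero_sum_rel n)"
  shows "\<forall>j\<in>{1..n}. \<exists>t::nat. t > 0 \<and>
           (\<forall>xs. length xs = m \<longrightarrow> f j xs = (\<Sum>x\<leftarrow>xs. tmul t x))"
proof -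
  have zero: "\<And>i. i \<in> {1..n} \<Longrightarrow> f i (replicate m 0) = 0"
    using assms(2) unfolding is_WNU_def by blast
  have "is_WNU m (f 1)"
    using assms(1,2) by simp
  then obtain t where "t > 0" and f1: "\<And>xs. length xs = m \<Longrightarrow> f 1 xs = (\<Sum>x\<leftarrow>xs. tmul t x)"
    using additive_WNU_eq_sum_tmul preserves_zero_sum_rel_additive[OF assms(1) zero assms(3)]
    by blast
  show ?thesis
    using \<open>t > 0\<close> f1 preserves_zero_sum_rel_eq[OF assms(1) zero assms(3)] by metis
qed

end
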